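(* Let $K$ be a good triangulation of $P^n$, let $T\in C^2(K,W;\mathbb Q)$ be a Thom cocycle of $H_{1,0}$, and let $\mathcal O$ be a good ordering of $K$ with respect to $H_{1,0}$. Then: (1) the map $\alpha\mapsto T\overset{\mathcal O}{\cap}\alpha$ commutes with the boundary $\delta$; (2) the image of $T\overset{\mathcal O}{\cap}:C_k(K;\mathbb Q)\to C_{k-2}(K;\mathbb Q)$ is contained in $C_{k-2}(L_1;\mathbb Q)$, where $L_1=K\cap H_{1,0}$. Consequently $T\overset{\mathcal O}{\cap}$ induces a homomorphism of complexes $C_k(K,\mathbf D^n;\mathbb Q)\to C_{k-2}(L_1,\mathbf D^{n-1};\mathbb Q)$.
   Context: $P^n=(\mathbb P^1_{\mathbb C})^n$ with coordinates $z_1,\dots,z_n$; $H_{i,\alpha}=\{z_i=\alpha\}$ for $\alpha\in\{0,\infty\}$; cubical faces are nonempty intersections of one or more $H_{i,\alpha}$; $\mathbf D^n=\bigcup_i\{z_i=1\}$. $H_{1,0}$ is identified with $P^{n-1}$ via $(0,z_2,\dots,z_n)\mapsto(z_2,\dots,z_n)$, and $\mathbf D^{n-1}$ denotes $\mathbf D^n\cap H_{1,0}$. A good triangulation of $P^n$ is a finite simplicial complex $K$ with a semi-algebraic homeomorphism $|K|\to P^n$ (used to identify them) such that: (1) $\mathbf D^n$ is a subcomplex; (2) the image of the relative interior of each simplex is a regular submanifold; (3) every finite union of cubical faces is a full subcomplex (a subcomplex $L$ such that any simplex of $K$ all of whose vertices lie in $L$ belongs to $L$); (4) each set $\{|z_i|\le1\}$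 is a subcomplex. Let $W$ be the union of the simplices of $K$ not meeting $H_{1,0}$ and $\Delta=\{|z_1|<1\}$. There are isomorphisms $H^2(K,W;\mathbb Q)\leftarrow H^2_{\rm sing}(P^n,P^n-H_{1,0};\mathbb Q)\to H^2_{\rm sing}(\Delta,\Delta-H_{1,0};\mathbb Q)$. A Thom cocycle is a simplicial cocycle $T\in C^2(K,W;\mathbb Q)$ (i.e. vanishing on simplices in $W$) whose class corresponds under these isomorphisms to $\delta[\frac{dz_1}{2\pi i z_1}]$, where $[\frac{dz_1}{2\pi i z_1}]\in H^1_{\rm sing}(\Delta-H_{1,0};\mathbb Q)$ and $\delta$ is the connecting homomorphism. An ordering of $K$ is a partial order on the vertices whose restriction to the vertices of each simplex is total; it is good with respect to $H_{1,0}$ if whenever a vertex $v$ lies on $H_{1,0}$ and $w\ge v$, then $w\in H_{1,0}$. For $u\in C^p(K;\mathbb Q)$ and a simplex $\alpha=[v_0,\dots,v_k]$ with $v_0<\dots<v_k$, $u\overset{\mathcal O}{\cap}\alpha=u([v_0,\dots,v_p])\,[v_p,\dots,v_k]$, extended linearly. *)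

theory Defs
  imports "HOL-Analysis.Analysis"
begin

text \<open>P^1 (the Riemann sphere) is modelled as the unit sphere in R x C,
with the coordinate given by stereographic projection from the north pole
(1,0): the point (t,w) has coordinate w/(1-t), and the north pole has
coordinate infinity (encoded as None).\<close>

definition P1 :: "(real \<times> complex) set" where
  "P1 = sphere 0 1"

definition zc :: "real \<times> complex \<Rightarrow> complex option" where
  "zc p = (if fst p = 1 then None else Some (snd p / complex_of_real (1 - fst p)))"

definition Ptop :: "nat \<Rightarrow> (nat \<Rightarrow> real \<times> complex) topology" where
  "Ptop n = product_topology (\<lambda>i. top_of_set P1) {1..n}"

definition Pn :: "nat \<Rightarrow> (nat \<Rightarrow> real \<times> complex) set" where
  "Pn n = topspace (Ptop n)"

definition Hyp :: "nat \<Rightarrow> nat \<Rightarrow> complex option \<Rightarrow> (nat \<Rightarrow> real \<times> complex) set" where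
  "Hyp n i \<alpha> = {x \<in> Pn n. zc (x i) = \<alpha>}"

definition cubical_face :: "nat \<Rightarrow> (nat \<Rightarrow> real \<times> complex) set \<Rightarrow> bool" where
  "cubical_face n C \<longleftrightarrow> C \<noteq> {} \<and>
     (\<exists>J. J \<noteq> {} \<and> J \<subseteq> {1..n} \<times> {Some 0, None} \<and>
          C = Pn n \<inter> (\<Inter>(i,\<alpha>)\<in>J. Hyp n i \<alpha>))"

definition Dn :: "nat \<Rightarrow> (nat \<Rightarrow> real \<times> complex) set" where
  "Dn n = (\<Union>i\<in>{1..n}. {x \<in> Pn n. zc (x i) = Some 1})"

definition unit_poly :: "nat \<Rightarrow> nat \<Rightarrow> (nat \<Rightarrow> real \<times> complex) set" where
  "unit_poly n i = {x \<in> Pn n. \<exists>z. zc (x i) = Some z \<and> cmod z \<le> 1}"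

definition simplicial_complex :: "'v set set \<Rightarrow> bool" where
  "simplicial_complex K \<longleftrightarrow> finite K \<and>
     (\<forall>\<sigma>\<in>K. finite \<sigma> \<and> \<sigma> \<noteq> {} \<and> (\<forall>\<tau>. \<tau> \<subseteq> \<sigma> \<and> \<tau> \<noteq> {} \<longrightarrow> \<tau> \<in> K))"

definition vertices :: "'v set set \<Rightarrow> 'v set" where
  "vertices K = \<Union>K"

text \<open>|K|: barycentric-coordinate functions supported on a simplex.\<close>
definition realization :: "'v set set \<Rightarrow> ('v \<Rightarrow> real) set" where
  "realization K = {f. (\<forall>v. 0 \<le> f v) \<and> {v. f v \<noteq> 0} \<in> K \<and> sum f (vertices K) = 1}"

definition closed_simplex :: "'v set set \<Rightarrow> 'v set \<Rightarrow> ('v \<Rightarrow> real) set" where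
  "closed_simplex K \<sigma> = {f \<in> realization K. {v. f v \<noteq> 0} \<subseteq> \<sigma>}"

definition open_simplex :: "'v set set \<Rightarrow> 'v set \<Rightarrow> ('v \<Rightarrow> real) set" where
  "open_simplex K \<sigma> = {f \<in> realization K. {v. f v \<noteq> 0} = \<sigma>}"

definition vertex_point :: "'v \<Rightarrow> 'v \<Rightarrow> real" where
  "vertex_point v = (\<lambda>w. if w = v then 1 else 0)"

definition simplices_in ::
  "'v set set \<Rightarrow> (('v \<Rightarrow> real) \<Rightarrow> 'a) \<Rightarrow> 'a set \<Rightarrow> 'v set set" where
  "simplices_in K h S = {\<sigma> \<in> K. h ` closed_simplex K \<sigma> \<subseteq> S}"

definition is_subcomplex ::
  "'v set set \<Rightarrow> (('v \<Rightarrow> real) \<Rightarrow> 'a) \<Rightarrow> 'a set \<Rightarrow> bool" where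
  "is_subcomplex K h S \<longleftrightarrow> S = (\<Union>\<sigma>\<in>simplices_in K h S. h ` closed_simplex K \<sigma>)"

definition is_full_subcomplex ::
  "'v set set \<Rightarrow> (('v \<Rightarrow> real) \<Rightarrow> 'a) \<Rightarrow> 'a set \<Rightarrow> bool" where
  "is_full_subcomplex K h S \<longleftrightarrow> is_subcomplex K h S \<and>
     (\<forall>\<sigma>\<in>K. (\<forall>v\<in>\<sigma>. h (vertex_point v) \<in> S) \<longrightarrow> \<sigma> \<in> simplices_in K h S)"

definition good_triangulation ::
  "nat \<Rightarrow> 'v set set \<Rightarrow> (('v \<Rightarrow> real) \<Rightarrow> nat \<Rightarrow> real \<times> complex) \<Rightarrow> bool" where
  "good_triangulation n K h \<longleftrightarrow>
     simplicial_complex K \<and>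
     homeomorphic_map (top_of_set (realization K)) (Ptop n) h \<and>
     is_subcomplex K h (Dn n) \<and>
     (\<forall>F. finite F \<and> (\<forall>C\<in>F. cubical_face n C) \<longrightarrow> is_full_subcomplex K h (\<Union>F)) \<and>
     (\<forall>i\<in>{1..n}. is_subcomplex K h (unit_poly n i))"

definition is_ordering :: "'v set set \<Rightarrow> ('v \<Rightarrow> 'v \<Rightarrow> bool) \<Rightarrow> bool" where
  "is_ordering K le \<longleftrightarrow> partial_order_on (vertices K) {(a,b). a \<in> vertices K \<and> b \<in> vertices K \<and> le a b}
     \<and> (\<forall>\<sigma>\<in>K. \<forall>a\<in>\<sigma>. \<forall>b\<in>\<sigma>. le a b \<or> le b a)"

definition good_ordering_wrt ::
  "'v set set \<Rightarrow> (('v \<Rightarrow> real) \<Rightarrow> 'a) \<Rightarrow> ('v \<Rightarrow> 'v \<Rightarrow> bool) \<Rightarrow> 'a set \<Rightarrow> bool" where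
  "good_ordering_wrt K h le H \<longleftrightarrow> is_ordering K le \<and>
     (\<forall>v\<in>vertices K. \<forall>w\<in>vertices K. h (vertex_point v) \<in> H \<and> le v w \<longrightarrow> h (vertex_point w) \<in> H)"

definition vlist :: "('v \<Rightarrow> 'v \<Rightarrow> bool) \<Rightarrow> 'v set \<Rightarrow> 'v list" where
  "vlist le \<sigma> = (THE xs. distinct xs \<and> set xs = \<sigma> \<and> sorted_wrt le xs)"

text \<open>Simplicial k-chains (rational coefficients): the oriented simplex
[v_0,...,v_k] (v_0 < ... < v_k) is represented by its vertex set; a chain is
a coefficient function supported on k-simplices of K.\<close>
definition is_chain :: "'v set set \<Rightarrow> nat \<Rightarrow> ('v set \<Rightarrow> rat) \<Rightarrow> bool" where
  "is_chain K k c \<longleftrightarrow> (\<forall>\<sigma>. c \<sigma> \<noteq> 0 \<longrightarrow> \<sigma> \<in> K \<and> card \<sigma> = Suc k)"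

definition supported_in :: "'v set set \<Rightarrow> ('v set \<Rightarrow> rat) \<Rightarrow> bool" where
  "supported_in L c \<longleftrightarrow> (\<forall>\<sigma>. c \<sigma> \<noteq> 0 \<longrightarrow> \<sigma> \<in> L)"

text \<open>Incidence number [sigma : tau]: (-1)^j if tau is sigma with v_j removed.\<close>
definition incidence :: "('v \<Rightarrow> 'v \<Rightarrow> bool) \<Rightarrow> 'v set \<Rightarrow> 'v set \<Rightarrow> rat" where
  "incidence le \<sigma> \<tau> =
     (if \<tau> \<noteq> {} \<and> \<tau> \<subseteq> \<sigma> \<and> card \<sigma> = Suc (card \<tau>)
      then (-1) ^ (length (takeWhile (\<lambda>x. x \<noteq> the_elem (\<sigma> - \<tau>)) (vlist le \<sigma>))) else 0)"

definition bdry :: "'v set set \<Rightarrow> ('v \<Rightarrow> 'v \<Rightarrow> bool) \<Rightarrow> ('v set \<Rightarrow> rat) \<Rightarrow> ('v set \<Rightarrow> rat)" where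
  "bdry K le c = (\<lambda>\<tau>. \<Sum>\<sigma>\<in>K. c \<sigma> * incidence le \<sigma> \<tau>)"

text \<open>p-cochains are functions on simplices (only values on p-simplices of K matter).
u is a cocycle: (delta u)[v_0..v_{p+1}] = sum_j (-1)^j u[..^v_j..] = 0.\<close>
definition is_cocycle :: "'v set set \<Rightarrow> ('v \<Rightarrow> 'v \<Rightarrow> bool) \<Rightarrow> nat \<Rightarrow> ('v set \<Rightarrow> rat) \<Rightarrow> bool" where
  "is_cocycle K le p u \<longleftrightarrow>
     (\<forall>\<sigma>\<in>K. card \<sigma> = p + 2 \<longrightarrow> (\<Sum>\<tau>\<in>Pow \<sigma>. incidence le \<sigma> \<tau> * u \<tau>) = 0)"

definition cap_ord ::
  "'v set set \<Rightarrow> ('v \<Rightarrow> 'v \<Rightarrow> bool) \<Rightarrow> nat \<Rightarrow> ('v set \<Rightarrow> rat) \<Rightarrow> ('v set \<Rightarrow> rat) \<Rightarrow> ('v set \<Rightarrow> rat)" where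
  "cap_ord K le p u c = (\<lambda>\<tau>. \<Sum>\<sigma>\<in>K. c \<sigma> *
      (if Suc p \<le> card \<sigma> \<and> \<tau> = set (drop p (vlist le \<sigma>))
       then u (set (take (Suc p) (vlist le \<sigma>))) else 0))"

end

theory Submission
  imports Defs
begin

text \<open>For an ordered simplex \<open>[v\<^sub>0,\<dots>,v\<^sub>k]\<close> the ordered cap product is
  \<open>T(v\<^sub>0v\<^sub>1v\<^sub>2)[v\<^sub>2,\<dots>,v\<^sub>k]\<close>. In \<open>T \<inter> \<partial>\<sigma>\<close> the faces omitting \<open>v\<^sub>j\<close>, \<open>j \<ge> 3\<close>,
  reproduce the corresponding terms of \<open>\<partial>(T \<inter> \<sigma>) = T(v\<^sub>0v\<^sub>1v\<^sub>2) \<partial>[v\<^sub>2,\<dots>,v\<^sub>k]\<close>, and the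
  faces omitting \<open>v\<^sub>0, v\<^sub>1, v\<^sub>2\<close> add up, by the cocycle relation on \<open>[v\<^sub>0,\<dots>,v\<^sub>3]\<close>, to the
  remaining term \<open>T(v\<^sub>0v\<^sub>1v\<^sub>2)[v\<^sub>3,\<dots>,v\<^sub>k]\<close>; so capping with \<open>T\<close> is a chain map.
  If \<open>T(v\<^sub>0v\<^sub>1v\<^sub>2) \<noteq> 0\<close>, the triangle meets \<open>H\<^sub>1\<^sub>,\<^sub>0\<close>, and since \<open>H\<^sub>1\<^sub>,\<^sub>0\<close> is a
  subcomplex some vertex \<open>v\<^sub>i\<close>, \<open>i \<le> 2\<close>, lies on it; goodness of the ordering then puts
  \<open>v\<^sub>2,\<dots>,v\<^sub>k\<close> on \<open>H\<^sub>1\<^sub>,\<^sub>0\<close>, and fullness the simplex \<open>[v\<^sub>2,\<dots>,v\<^sub>k]\<close>.\<close>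

lemma ordering_antisym:
  "is_ordering K le \<Longrightarrow> a \<in> vertices K \<Longrightarrow> b \<in> vertices K \<Longrightarrow> le a b \<Longrightarrow> le b a \<Longrightarrow> a = b"
  unfolding is_ordering_def partial_order_on_def antisym_def by blast

lemma ordering_trans:
  "is_ordering K le \<Longrightarrow> a \<in> vertices K \<Longrightarrow> b \<in> vertices K \<Longrightarrow> c \<in> vertices K
    \<Longrightarrow> le a b \<Longrightarrow> le b c \<Longrightarrow> le a c"
  unfolding is_ordering_def partial_order_on_def preorder_on_def trans_def by blast

lemma ordering_refl: "is_ordering K le \<Longrightarrow> a \<in> vertices K \<Longrightarrow> le a a"
  unfolding is_ordering_def partial_order_on_def preorder_on_def refl_on_def by blast

lemma ordering_total: "is_ordering K le \<Longrightarrow> \<sigma> \<in> K \<Longrightarrow> a \<in> \<sigma> \<Longrightarrow> b \<in> \<sigma> \<Longrightarrow> le a b \<or> le b a"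
  unfolding is_ordering_def by blast

lemma simplex_subset_vertices: "\<sigma> \<in> K \<Longrightarrow> \<sigma> \<subseteq> vertices K"
  unfolding vertices_def by blast

lemma simplicial_complex_face:
  "simplicial_complex K \<Longrightarrow> \<sigma> \<in> K \<Longrightarrow> \<tau> \<subseteq> \<sigma> \<Longrightarrow> \<tau> \<noteq> {} \<Longrightarrow> \<tau> \<in> K"
  unfolding simplicial_complex_def by blast

lemma simplicial_complex_finite: "simplicial_complex K \<Longrightarrow> finite K"
  unfolding simplicial_complex_def by blast

lemma simplicial_complex_finite_simplex: "simplicial_complex K \<Longrightarrow> \<sigma> \<in> K \<Longrightarrow> finite \<sigma>"
  unfolding simplicial_complex_def by blast

lemma sorted_wrt_antisym_unique:
  assumes antisym: "\<And>a b. a \<in> S \<Longrightarrow> b \<in> S \<Longrightarrow> le a b \<Longrightarrow> le b a \<Longrightarrow> a = b"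
  shows "distinct xs \<Longrightarrow> sorted_wrt le xs \<Longrightarrow> distinct ys \<Longrightarrow> sorted_wrt le ys
    \<Longrightarrow> set xs = set ys \<Longrightarrow> set xs \<subseteq> S \<Longrightarrow> xs = ys"
proof (induction xs arbitrary: ys)
  case Nil
  then show ?case by simp
next
  case (Cons x xs)
  then obtain y ys' where ys: "ys = y # ys'"
    by (cases ys) auto
  have "x = y"
  proof (rule ccontr)
    assume "x \<noteq> y"
    have "y \<in> set (x # xs)" "x \<in> set (y # ys')"
      using Cons.prems(5) unfolding ys by (metis list.set_intros(1))+
    then have "y \<in> set xs" "x \<in> set ys'"
      using \<open>x \<noteq> y\<close> by auto
    then have "le x y" "le y x"
      using Cons.prems(2,4) unfolding ys by auto
    moreover have "x \<in> S" "y \<in> S"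
      using Cons.prems(5,6) \<open>y \<in> set xs\<close> by auto
    ultimately show False
      using antisym \<open>x \<noteq> y\<close> by blast
  qed
  moreover have "set xs = set ys'"
    using Cons.prems(1,3,5) \<open>x = y\<close> unfolding ys by (simp add: insert_ident)
  then have "xs = ys'"
    using Cons.prems(1-4,6) unfolding ys by (auto intro!: Cons.IH)
  ultimately show ?case
    using ys by simp
qed

lemma vlist_sorted:
  assumes ord: "is_ordering K le" and xs: "distinct xs" "sorted_wrt le xs" "set xs \<subseteq> vertices K"
  shows "vlist le (set xs) = xs"
  unfolding vlist_def
proof (rule the_equality)
  fix ys
  assume "distinct ys \<and> set ys = set xs \<and> sorted_wrt le ys"
  then show "ys = xs"
    using xs by (intro sorted_wrt_antisym_unique[of "vertices K" le]) (auto intro: ordering_antisym[OF ord])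
qed (use xs in simp)

lemma finite_total_has_least:
  assumes "finite A" "A \<noteq> {}"
    and total: "\<And>a b. a \<in> A \<Longrightarrow> b \<in> A \<Longrightarrow> le a b \<or> le b a"
    and trans: "\<And>a b c. a \<in> A \<Longrightarrow> b \<in> A \<Longrightarrow> c \<in> A \<Longrightarrow> le a b \<Longrightarrow> le b c \<Longrightarrow> le a c"
  shows "\<exists>m\<in>A. \<forall>x\<in>A. le m x"
  using assms(1,2) total trans
proof (induction A rule: finite_ne_induct)
  case (singleton x)
  show ?case
    using singleton.prems(1)[of x x] by simp
next
  case (insert x F)
  have "\<exists>m\<in>F. \<forall>y\<in>F. le m y"
  proof (rule insert.IH)
    show "le a b \<or> le b a" if "a \<in> F" "b \<in> F" for a b
      using insert.prems(1) that by simp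
    show "le a c" if "a \<in> F" "b \<in> F" "c \<in> F" "le a b" "le b c" for a b c
      using insert.prems(2)[of a b c] that by simp
  qed
  then obtain m where m: "m \<in> F" "\<forall>y\<in>F. le m y"
    by blast
  show ?case
  proof (cases "le x m")
    case True
    have "\<forall>y\<in>F. le x y"
      using True m insert.prems(2)[of x m] by simp
    moreover have "le x x"
      using insert.prems(1)[of x x] by simp
    ultimately show ?thesis
      by simp
  next
    case False
    then have "le m x"
      using m(1) insert.prems(1)[of x m] by simp
    then show ?thesis
      using m by blast
  qed
qed

lemma finite_total_sorted_list:
  assumes "finite A"
    and total: "\<And>a b. a \<in> A \<Longrightarrow> b \<in> A \<Longrightarrow> le a b \<or> le b a"
    and trans: "\<And>a b c. a \<in> A \<Longrightarrow> b \<in> A \<Longrightarrow> c \<in> A \<Longrightarrow> le a b \<Longrightarrow> le b c \<Longrightarrow> le a c"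
  shows "\<exists>xs. distinct xs \<and> set xs = A \<and> sorted_wrt le xs"
  using assms(1)
proof (induction A rule: finite_remove_induct)
  case empty
  then show ?case by simp
next
  case (remove B)
  have "\<exists>m\<in>B. \<forall>x\<in>B. le m x"
  proof (rule finite_total_has_least)
    show "le a b \<or> le b a" if "a \<in> B" "b \<in> B" for a b
      using total that remove.hyps(3) by blast
    show "le a c" if "a \<in> B" "b \<in> B" "c \<in> B" "le a b" "le b c" for a b c
      using trans[of a b c] that remove.hyps(3) by blast
  qed (use remove.hyps in auto)
  then obtain m where m: "m \<in> B" "\<forall>x\<in>B. le m x"
    by blast
  obtain xs where "distinct xs" "set xs = B - {m}" "sorted_wrt le xs"
    using remove.IH[OF m(1)] by blast
  then have "distinct (m # xs) \<and> set (m # xs) = B \<and> sorted_wrt le (m # xs)"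
    using m by auto
  then show ?case by blast
qed

lemma simplex_sorted_list:
  assumes K: "simplicial_complex K" and ord: "is_ordering K le" and \<rho>: "\<rho> \<in> K"
  obtains xs where "distinct xs" "set xs = \<rho>" "sorted_wrt le xs"
proof -
  have "finite \<rho>"
    using K \<rho> by (rule simplicial_complex_finite_simplex)
  moreover have "\<And>a b c. a \<in> \<rho> \<Longrightarrow> b \<in> \<rho> \<Longrightarrow> c \<in> \<rho> \<Longrightarrow> le a b \<Longrightarrow> le b c \<Longrightarrow> le a c"
    using ordering_trans[OF ord] simplex_subset_vertices[OF \<rho>] by blast
  ultimately show ?thesis
    using finite_total_sorted_list[of \<rho> le] ordering_total[OF ord \<rho>] that by blast
qed

lemma length_takeWhile_neq_nth:
  assumes "distinct ys" "j < length ys"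
  shows "length (takeWhile (\<lambda>x. x \<noteq> ys ! j) ys) = j"
proof -
  have ys: "ys = take j ys @ ys ! j # drop (Suc j) ys"
    using assms(2) by (rule id_take_nth_drop)
  have "ys ! j \<notin> set (take j ys)"
    using assms by (auto simp: in_set_conv_nth nth_eq_iff_index_eq)
  then have "takeWhile (\<lambda>x. x \<noteq> ys ! j) (take j ys @ ys ! j # drop (Suc j) ys) = take j ys"
    by (subst takeWhile_append2) auto
  then show ?thesis
    using ys assms(2) by (metis length_take min.absorb4)
qed

lemma incidence_nonzeroD:
  "incidence le \<sigma> \<tau> \<noteq> 0 \<Longrightarrow> \<tau> \<noteq> {} \<and> \<tau> \<subseteq> \<sigma> \<and> card \<sigma> = Suc (card \<tau>)"
  unfolding incidence_def by (auto split: if_splits)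

lemma incidence_nonzero_face:
  assumes "finite \<sigma>" "incidence le \<sigma> \<tau> \<noteq> 0"
  shows "\<exists>v\<in>\<sigma>. \<tau> = \<sigma> - {v}"
proof -
  have \<tau>: "\<tau> \<subseteq> \<sigma>" "card \<sigma> = Suc (card \<tau>)"
    using incidence_nonzeroD[OF assms(2)] by auto
  then have "card (\<sigma> - \<tau>) = 1"
    using assms(1) by (simp add: card_Diff_subset finite_subset)
  then obtain v where "\<sigma> - \<tau> = {v}"
    using card_1_singletonE by blast
  then show ?thesis
    using \<tau>(1) by blast
qed

lemma incidence_face:
  assumes ord: "is_ordering K le"
    and ys: "distinct ys" "sorted_wrt le ys" "set ys \<subseteq> vertices K"
    and j: "2 \<le> length ys" "j < length ys"
  shows "incidence le (set ys) (set ys - {ys ! j}) = (-1) ^ j"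
proof -
  have "ys ! j \<in> set ys"
    using j by simp
  moreover have card: "card (set ys) = length ys"
    using ys by (simp add: distinct_card)
  ultimately have face_card: "card (set ys - {ys ! j}) = length ys - 1"
    by simp
  then have "card (set ys - {ys ! j}) > 0"
    using j by simp
  then have "set ys - {ys ! j} \<noteq> {}"
    by (metis card.empty less_irrefl)
  moreover have "card (set ys) = Suc (card (set ys - {ys ! j}))"
    using face_card card j by simp
  moreover have "set ys - (set ys - {ys ! j}) = {ys ! j}"
    using \<open>ys ! j \<in> set ys\<close> by blast
  ultimately show ?thesis
    unfolding incidence_def vlist_sorted[OF ord ys]
    by (simp add: length_takeWhile_neq_nth[OF ys(1) j(2)])
qed

lemma nth_face_inj:
  assumes "distinct ys"
  shows "inj_on (\<lambda>j. set ys - {ys ! j}) {..<length ys}"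
proof (rule inj_onI)
  fix i j
  assume i: "i \<in> {..<length ys}" and j: "j \<in> {..<length ys}"
    and eq: "set ys - {ys ! i} = set ys - {ys ! j}"
  have "ys ! i \<in> set ys"
    using i by simp
  moreover have "ys ! i \<notin> set ys - {ys ! j}"
    unfolding eq[symmetric] by simp
  ultimately have "ys ! i = ys ! j"
    by blast
  then show "i = j"
    using assms i j by (simp add: nth_eq_iff_index_eq)
qed

lemma sum_incidence_faces:
  assumes ord: "is_ordering K le"
    and ys: "distinct ys" "sorted_wrt le ys" "set ys \<subseteq> vertices K" "2 \<le> length ys"
    and F: "finite F" "\<And>j. j < length ys \<Longrightarrow> set ys - {ys ! j} \<in> F"
  shows "(\<Sum>\<sigma>\<in>F. incidence le (set ys) \<sigma> * g \<sigma>) = (\<Sum>j<length ys. (-1) ^ j * g (set ys - {ys ! j}))"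
proof -
  let ?face = "\<lambda>j. set ys - {ys ! j}"
  have "(\<Sum>\<sigma>\<in>F. incidence le (set ys) \<sigma> * g \<sigma>) = (\<Sum>\<sigma>\<in>?face ` {..<length ys}. incidence le (set ys) \<sigma> * g \<sigma>)"
  proof (rule sum.mono_neutral_right)
    show "\<forall>\<sigma>\<in>F - ?face ` {..<length ys}. incidence le (set ys) \<sigma> * g \<sigma> = 0"
    proof
      fix \<sigma>
      assume \<sigma>: "\<sigma> \<in> F - ?face ` {..<length ys}"
      have "incidence le (set ys) \<sigma> = 0"
      proof (rule ccontr)
        assume "incidence le (set ys) \<sigma> \<noteq> 0"
        then obtain v where "v \<in> set ys" "\<sigma> = set ys - {v}"
          using incidence_nonzero_face by blast
        then obtain j where "j < length ys" "\<sigma> = ?face j"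
          by (metis in_set_conv_nth)
        then show False
          using \<sigma> by blast
      qed
      then show "incidence le (set ys) \<sigma> * g \<sigma> = 0"
        by simp
    qed
  qed (use F in auto)
  also have "\<dots> = (\<Sum>j<length ys. incidence le (set ys) (?face j) * g (?face j))"
    by (simp add: sum.reindex[OF nth_face_inj[OF ys(1)]])
  also have "\<dots> = (\<Sum>j<length ys. (-1) ^ j * g (?face j))"
    using incidence_face[OF ord ys] by simp
  finally show ?thesis .
qed

lemma incidence_sorted:
  assumes ord: "is_ordering K le"
    and ys: "distinct ys" "sorted_wrt le ys" "set ys \<subseteq> vertices K" "2 \<le> length ys"
  shows "incidence le (set ys) \<tau> = (\<Sum>j<length ys. if \<tau> = set ys - {ys ! j} then (-1) ^ j else 0)"
proof -
  have "incidence le (set ys) \<tau>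
      = (\<Sum>\<sigma>\<in>insert \<tau> (Pow (set ys)). if \<sigma> = \<tau> then incidence le (set ys) \<sigma> else 0)"
    by (simp add: sum.delta)
  also have "\<dots> = (\<Sum>\<sigma>\<in>insert \<tau> (Pow (set ys)). incidence le (set ys) \<sigma> * (if \<sigma> = \<tau> then 1 else 0))"
    by (rule sum.cong) simp_all
  also have "\<dots> = (\<Sum>j<length ys. (-1) ^ j * (if set ys - {ys ! j} = \<tau> then 1 else 0))"
    by (rule sum_incidence_faces[OF ord ys]) auto
  also have "\<dots> = (\<Sum>j<length ys. if \<tau> = set ys - {ys ! j} then (-1) ^ j else 0)"
    by (rule sum.cong) auto
  finally show ?thesis .
qed

lemma incidence_card_le_1:
  assumes "finite \<sigma>" "card \<sigma> \<le> 1"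
  shows "incidence le \<sigma> \<tau> = 0"
proof (rule ccontr)
  assume "incidence le \<sigma> \<tau> \<noteq> 0"
  then have "\<tau> \<noteq> {}" "\<tau> \<subseteq> \<sigma>" "card \<sigma> = Suc (card \<tau>)"
    using incidence_nonzeroD by blast+
  then show False
    using assms finite_subset[of \<tau> \<sigma>] by simp
qed

definition cap_coeff :: "('v \<Rightarrow> 'v \<Rightarrow> bool) \<Rightarrow> nat \<Rightarrow> ('v set \<Rightarrow> rat) \<Rightarrow> 'v set \<Rightarrow> 'v set \<Rightarrow> rat" where
  "cap_coeff le p u \<sigma> \<tau> =
     (if Suc p \<le> card \<sigma> \<and> \<tau> = set (drop p (vlist le \<sigma>))
      then u (set (take (Suc p) (vlist le \<sigma>))) else 0)"

lemma cap_ord_eq_sum: "cap_ord K le p u c \<tau> = (\<Sum>\<sigma>\<in>K. c \<sigma> * cap_coeff le p u \<sigma> \<tau>)"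
  unfolding cap_ord_def cap_coeff_def by simp

lemma cap_coeff_sorted:
  assumes ord: "is_ordering K le" and xs: "distinct xs" "sorted_wrt le xs" "set xs \<subseteq> vertices K"
  shows "cap_coeff le p u (set xs) \<tau> =
    (if Suc p \<le> length xs \<and> \<tau> = set (drop p xs) then u (set (take (Suc p) xs)) else 0)"
  unfolding cap_coeff_def vlist_sorted[OF ord xs] using xs(1) by (simp add: distinct_card)

lemma cap_coeff_delete:
  assumes ord: "is_ordering K le" and xs: "distinct xs" "sorted_wrt le xs" "set xs \<subseteq> vertices K"
  shows "cap_coeff le p u (set xs - {x}) \<tau> =
    (if Suc p \<le> length (removeAll x xs) \<and> \<tau> = set (drop p (removeAll x xs))
     then u (set (take (Suc p) (removeAll x xs))) else 0)"
proof -
  have "distinct (removeAll x xs)" "sorted_wrt le (removeAll x xs)" "set (removeAll x xs) \<subseteq> vertices K"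
    using xs by (auto simp: distinct_removeAll removeAll_filter_not_eq sorted_wrt_filter)
  from cap_coeff_sorted[OF ord this] show ?thesis
    by simp
qed

lemma sum_cap_coeff:
  assumes K: "simplicial_complex K" and ord: "is_ordering K le"
    and xs: "distinct xs" "sorted_wrt le xs" "set xs \<in> K"
  shows "(\<Sum>\<sigma>\<in>K. cap_coeff le p u (set xs) \<sigma> * g \<sigma>) =
    (if Suc p \<le> length xs then u (set (take (Suc p) xs)) * g (set (drop p xs)) else 0)"
proof -
  have cap: "cap_coeff le p u (set xs) \<sigma> =
      (if Suc p \<le> length xs \<and> \<sigma> = set (drop p xs) then u (set (take (Suc p) xs)) else 0)" for \<sigma>
    using cap_coeff_sorted[OF ord xs(1,2) simplex_subset_vertices[OF xs(3)]] .
  show ?thesis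
  proof (cases "Suc p \<le> length xs")
    case True
    then have "set (drop p xs) \<in> K"
      using simplicial_complex_face[OF K xs(3)] by (simp add: set_drop_subset)
    have "(\<Sum>\<sigma>\<in>K. cap_coeff le p u (set xs) \<sigma> * g \<sigma>)
        = (\<Sum>\<sigma>\<in>K. if \<sigma> = set (drop p xs) then u (set (take (Suc p) xs)) * g \<sigma> else 0)"
      by (rule sum.cong) (simp_all add: cap True)
    also have "\<dots> = u (set (take (Suc p) xs)) * g (set (drop p xs))"
      using simplicial_complex_finite[OF K] \<open>set (drop p xs) \<in> K\<close> by (simp add: sum.delta')
    finally show ?thesis
      using True by simp
  qed (simp add: cap)
qed

lemma cocycle_sorted_4:
  assumes ord: "is_ordering K le" and T: "is_cocycle K le 2 T"
    and q: "distinct [a, b, c, e]" "sorted_wrt le [a, b, c, e]" "{a, b, c, e} \<in> K"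
  shows "T {b, c, e} - T {a, c, e} + T {a, b, e} - T {a, b, c} = 0"
proof -
  let ?q = "[a, b, c, e]"
  have q': "distinct ?q" "sorted_wrt le ?q" "set ?q \<subseteq> vertices K" "2 \<le> length ?q"
    using q simplex_subset_vertices[OF q(3)] by auto
  have "(\<Sum>\<tau>\<in>Pow (set ?q). incidence le (set ?q) \<tau> * T \<tau>) = 0"
    using T q unfolding is_cocycle_def by (simp add: distinct_card)
  moreover have "(\<Sum>\<tau>\<in>Pow (set ?q). incidence le (set ?q) \<tau> * T \<tau>)
      = (\<Sum>j<length ?q. (-1) ^ j * T (set ?q - {?q ! j}))"
    by (rule sum_incidence_faces[OF ord q']) auto
  moreover have "set ?q - {a} = {b, c, e}" "set ?q - {b} = {a, c, e}"
    "set ?q - {c} = {a, b, e}" "set ?q - {e} = {a, b, c}"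
    using q(1) by auto
  ultimately show ?thesis
    by (simp add: numeral_eq_Suc)
qed

lemma cap_incidence_short:
  assumes K: "simplicial_complex K" and ord: "is_ordering K le"
    and xs: "distinct xs" "sorted_wrt le xs" "set xs \<in> K" "length xs \<le> 3"
  shows "(\<Sum>\<sigma>\<in>K. cap_coeff le 2 T (set xs) \<sigma> * incidence le \<sigma> \<tau>) = 0"
    and "(\<Sum>\<sigma>\<in>K. incidence le (set xs) \<sigma> * cap_coeff le 2 T \<sigma> \<tau>) = 0"
proof -
  have "incidence le (set (drop 2 xs)) \<tau> = 0"
    using xs(1,4) by (intro incidence_card_le_1) (simp_all add: distinct_card)
  then show "(\<Sum>\<sigma>\<in>K. cap_coeff le 2 T (set xs) \<sigma> * incidence le \<sigma> \<tau>) = 0"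
    by (simp add: sum_cap_coeff[OF K ord xs(1-3)])
  have "incidence le (set xs) \<sigma> * cap_coeff le 2 T \<sigma> \<tau> = 0" for \<sigma>
  proof (cases "incidence le (set xs) \<sigma> = 0")
    case False
    then have "card (set xs) = Suc (card \<sigma>)"
      using incidence_nonzeroD by blast
    then have "card \<sigma> < 3"
      using xs(1,4) by (simp add: distinct_card)
    then show ?thesis
      unfolding cap_coeff_def by simp
  qed simp
  then show "(\<Sum>\<sigma>\<in>K. incidence le (set xs) \<sigma> * cap_coeff le 2 T \<sigma> \<tau>) = 0"
    by (intro sum.neutral) blast
qed

lemma cap_incidence_long_left:
  assumes K: "simplicial_complex K" and ord: "is_ordering K le"
    and xs: "distinct (a # b # c # e # R)" "sorted_wrt le (a # b # c # e # R)"
      "set (a # b # c # e # R) \<in> K"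
  shows "(\<Sum>\<sigma>\<in>K. cap_coeff le 2 T (set (a # b # c # e # R)) \<sigma> * incidence le \<sigma> \<tau>)
    = T {a, b, c} * ((if \<tau> = set (e # R) then 1 else 0) - (if \<tau> = set (c # R) then 1 else 0)
        + (\<Sum>i<length R. if \<tau> = set (c # e # R) - {R ! i} then (-1) ^ i else 0))"
proof -
  have "set (c # e # R) - {c} = set (e # R)" "set (c # e # R) - {e} = set (c # R)"
    using xs(1) by auto
  moreover have "incidence le (set (c # e # R)) \<tau>
      = (\<Sum>j<length (c # e # R). if \<tau> = set (c # e # R) - {(c # e # R) ! j} then (-1) ^ j else 0)"
    using xs simplex_subset_vertices[OF xs(3)] by (intro incidence_sorted[OF ord]) auto
  moreover have "(-1::rat) ^ Suc (Suc i) = (-1) ^ i" for i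
    by simp
  ultimately have "incidence le (set (c # e # R)) \<tau>
      = (if \<tau> = set (e # R) then 1 else 0) - (if \<tau> = set (c # R) then 1 else 0)
        + (\<Sum>i<length R. if \<tau> = set (c # e # R) - {R ! i} then (-1) ^ i else 0)"
    by (simp only: length_Cons sum.lessThan_Suc_shift) simp
  then show ?thesis
    unfolding sum_cap_coeff[OF K ord xs] by (simp add: numeral_eq_Suc)
qed

lemma cap_incidence_long_right:
  assumes K: "simplicial_complex K" and ord: "is_ordering K le"
    and xs: "distinct (a # b # c # e # R)" "sorted_wrt le (a # b # c # e # R)"
      "set (a # b # c # e # R) \<in> K"
  shows "(\<Sum>\<sigma>\<in>K. incidence le (set (a # b # c # e # R)) \<sigma> * cap_coeff le 2 T \<sigma> \<tau>)
    = (T {b, c, e} - T {a, c, e} + T {a, b, e}) * (if \<tau> = set (e # R) then 1 else 0)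
      - T {a, b, c} * (if \<tau> = set (c # R) then 1 else 0)
      + T {a, b, c} * (\<Sum>i<length R. if \<tau> = set (c # e # R) - {R ! i} then (-1) ^ i else 0)"
proof -
  let ?xs = "a # b # c # e # R"
  let ?cap = "\<lambda>x. cap_coeff le 2 T (set ?xs - {x}) \<tau>"
  have V: "set ?xs \<subseteq> vertices K"
    using xs(3) by (rule simplex_subset_vertices)
  have cap: "?cap x = (if 3 \<le> length (removeAll x ?xs) \<and> \<tau> = set (drop 2 (removeAll x ?xs))
      then T (set (take 3 (removeAll x ?xs))) else 0)" for x
    using cap_coeff_delete[OF ord xs(1,2) V] by (simp add: numeral_eq_Suc)
  have "removeAll a ?xs = b # c # e # R" "removeAll b ?xs = a # c # e # R"
    "removeAll c ?xs = a # b # e # R" "removeAll e ?xs = a # b # c # R"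
    using xs(1) by auto
  then have cap_abce: "?cap a = (if \<tau> = set (e # R) then T {b, c, e} else 0)"
    "?cap b = (if \<tau> = set (e # R) then T {a, c, e} else 0)"
    "?cap c = (if \<tau> = set (e # R) then T {a, b, e} else 0)"
    "?cap e = (if \<tau> = set (c # R) then T {a, b, c} else 0)"
    unfolding cap by (simp_all add: numeral_eq_Suc)
  have cap_R: "?cap (R ! i) = (if \<tau> = set (c # e # R) - {R ! i} then T {a, b, c} else 0)"
    if "i < length R" for i
  proof -
    have "R ! i \<in> set R"
      using that by simp
    then have "removeAll (R ! i) ?xs = a # b # c # e # removeAll (R ! i) R"
      "set (c # e # removeAll (R ! i) R) = set (c # e # R) - {R ! i}"
      using xs(1) by auto
    then show ?thesis
      unfolding cap by (simp add: numeral_eq_Suc)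
  qed
  have "(\<Sum>\<sigma>\<in>K. incidence le (set ?xs) \<sigma> * cap_coeff le 2 T \<sigma> \<tau>) = (\<Sum>j<length ?xs. (-1) ^ j * ?cap (?xs ! j))"
    using xs V simplicial_complex_finite[OF K]
    by (intro sum_incidence_faces[OF ord] simplicial_complex_face[OF K xs(3)]) auto
  also have "\<dots> = ?cap a - ?cap b + ?cap c - ?cap e + (\<Sum>i<length R. (-1) ^ i * ?cap (R ! i))"
    by (simp only: length_Cons sum.lessThan_Suc_shift nth_Cons_0 nth_Cons_Suc) (simp add: algebra_simps)
  also have "(\<Sum>i<length R. (-1) ^ i * ?cap (R ! i))
      = T {a, b, c} * (\<Sum>i<length R. if \<tau> = set (c # e # R) - {R ! i} then (-1) ^ i else 0)"
    unfolding sum_distrib_left by (rule sum.cong[OF refl], subst cap_R) auto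
  also have "?cap a - ?cap b + ?cap c - ?cap e
      = (T {b, c, e} - T {a, c, e} + T {a, b, e}) * (if \<tau> = set (e # R) then 1 else 0)
        - T {a, b, c} * (if \<tau> = set (c # R) then 1 else 0)"
    unfolding cap_abce by simp
  finally show ?thesis .
qed

lemma bdry_cap_simplex:
  assumes K: "simplicial_complex K" and ord: "is_ordering K le" and T: "is_cocycle K le 2 T"
    and xs: "distinct xs" "sorted_wrt le xs" "set xs \<in> K"
  shows "(\<Sum>\<sigma>\<in>K. cap_coeff le 2 T (set xs) \<sigma> * incidence le \<sigma> \<tau>)
    = (\<Sum>\<sigma>\<in>K. incidence le (set xs) \<sigma> * cap_coeff le 2 T \<sigma> \<tau>)"
proof (cases "length xs \<le> 3")
  case True
  then show ?thesis
    using cap_incidence_short[OF K ord xs] by simp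
next
  case False
  then obtain a b c e R where xs_eq: "xs = a # b # c # e # R"
    by (metis Suc_le_length_iff not_less_eq_eq numeral_3_eq_3)
  have cocycle: "T {b, c, e} - T {a, c, e} + T {a, b, e} = T {a, b, c}"
    using cocycle_sorted_4[OF ord T, of a b c e] xs simplicial_complex_face[OF K xs(3)]
    unfolding xs_eq by simp
  show ?thesis
    unfolding xs_eq cap_incidence_long_left[OF K ord xs[unfolded xs_eq]]
      cap_incidence_long_right[OF K ord xs[unfolded xs_eq]] cocycle
    by (simp add: algebra_simps)
qed

lemma bdry_cap_ord:
  assumes K: "simplicial_complex K" and ord: "is_ordering K le" and T: "is_cocycle K le 2 T"
  shows "bdry K le (cap_ord K le 2 T c) = cap_ord K le 2 T (bdry K le c)"
proof
  fix \<tau>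
  have "bdry K le (cap_ord K le 2 T c) \<tau>
      = (\<Sum>\<rho>\<in>K. c \<rho> * (\<Sum>\<sigma>\<in>K. cap_coeff le 2 T \<rho> \<sigma> * incidence le \<sigma> \<tau>))"
    unfolding bdry_def cap_ord_eq_sum sum_distrib_left sum_distrib_right
    by (subst sum.swap) (simp add: mult.assoc)
  also have "\<dots> = (\<Sum>\<rho>\<in>K. c \<rho> * (\<Sum>\<sigma>\<in>K. incidence le \<rho> \<sigma> * cap_coeff le 2 T \<sigma> \<tau>))"
  proof (rule sum.cong[OF refl])
    fix \<rho>
    assume "\<rho> \<in> K"
    moreover obtain xs where xs: "distinct xs" "set xs = \<rho>" "sorted_wrt le xs"
      using simplex_sorted_list[OF K ord \<open>\<rho> \<in> K\<close>] by blast
    ultimately show "c \<rho> * (\<Sum>\<sigma>\<in>K. cap_coeff le 2 T \<rho> \<sigma> * incidence le \<sigma> \<tau>)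
        = c \<rho> * (\<Sum>\<sigma>\<in>K. incidence le \<rho> \<sigma> * cap_coeff le 2 T \<sigma> \<tau>)"
      using bdry_cap_simplex[OF K ord T xs(1,3)] xs(2) by simp
  qed
  also have "\<dots> = cap_ord K le 2 T (bdry K le c) \<tau>"
    unfolding bdry_def cap_ord_eq_sum sum_distrib_left sum_distrib_right
    by (subst sum.swap) (simp add: mult.assoc)
  finally show "bdry K le (cap_ord K le 2 T c) \<tau> = cap_ord K le 2 T (bdry K le c) \<tau>" .
qed

lemma cap_coeff_nonzeroE:
  assumes K: "simplicial_complex K" and ord: "is_ordering K le"
    and \<rho>: "\<rho> \<in> K" and nz: "cap_coeff le p u \<rho> \<tau> \<noteq> 0"
  obtains xs where "distinct xs" "sorted_wrt le xs" "set xs = \<rho>" "Suc p \<le> length xs"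
    "\<tau> = set (drop p xs)" "u (set (take (Suc p) xs)) \<noteq> 0"
proof -
  obtain xs where xs: "distinct xs" "set xs = \<rho>" "sorted_wrt le xs"
    using simplex_sorted_list[OF K ord \<rho>] by blast
  then have "cap_coeff le p u \<rho> \<tau>
      = (if Suc p \<le> length xs \<and> \<tau> = set (drop p xs) then u (set (take (Suc p) xs)) else 0)"
    using cap_coeff_sorted[OF ord xs(1,3)] simplex_subset_vertices[OF \<rho>] by blast
  then show ?thesis
    using that xs nz by (simp split: if_splits)
qed

lemma cap_ord_nonzeroE:
  assumes "cap_ord K le p u c \<tau> \<noteq> 0"
  obtains \<rho> where "\<rho> \<in> K" "c \<rho> \<noteq> 0" "cap_coeff le p u \<rho> \<tau> \<noteq> 0"
proof -
  obtain \<rho> where "\<rho> \<in> K" "c \<rho> * cap_coeff le p u \<rho> \<tau> \<noteq> 0"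
    using assms unfolding cap_ord_eq_sum by (meson sum.neutral)
  then show ?thesis
    using that by simp
qed

lemma is_chain_cap_ord:
  assumes K: "simplicial_complex K" and ord: "is_ordering K le" and c: "is_chain K k c"
  shows "is_chain K (k - p) (cap_ord K le p u c)"
  unfolding is_chain_def
proof (intro allI impI)
  fix \<tau>
  assume "cap_ord K le p u c \<tau> \<noteq> 0"
  then obtain \<rho> where \<rho>: "\<rho> \<in> K" "c \<rho> \<noteq> 0" "cap_coeff le p u \<rho> \<tau> \<noteq> 0"
    by (rule cap_ord_nonzeroE)
  obtain xs where xs: "distinct xs" "sorted_wrt le xs" "set xs = \<rho>" "Suc p \<le> length xs"
    "\<tau> = set (drop p xs)" "u (set (take (Suc p) xs)) \<noteq> 0"
    by (rule cap_coeff_nonzeroE[OF K ord \<rho>(1,3)])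
  have "card \<rho> = Suc k"
    using c \<rho>(2) unfolding is_chain_def by blast
  then have "length xs = Suc k"
    using xs(1,3) distinct_card[of xs] by simp
  then have "card \<tau> = Suc (k - p)"
    using xs by (simp add: distinct_card)
  moreover have "\<tau> \<in> K"
    using simplicial_complex_face[OF K \<rho>(1)] xs by (auto simp: set_drop_subset)
  ultimately show "\<tau> \<in> K \<and> card \<tau> = Suc (k - p)"
    by blast
qed

lemma vertex_point_in_closed_simplex:
  assumes K: "simplicial_complex K" and \<sigma>: "\<sigma> \<in> K" "v \<in> \<sigma>"
  shows "vertex_point v \<in> closed_simplex K \<sigma>"
proof -
  have "finite (vertices K)"
    unfolding vertices_def
    using simplicial_complex_finite[OF K] simplicial_complex_finite_simplex[OF K] by blast
  moreover have "v \<in> vertices K"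
    using \<sigma> unfolding vertices_def by blast
  ultimately have "sum (vertex_point v) (vertices K) = 1"
    unfolding vertex_point_def by (simp add: sum.delta')
  moreover have "{w. vertex_point v w \<noteq> 0} = {v}"
    unfolding vertex_point_def by auto
  moreover have "{v} \<in> K"
    using simplicial_complex_face[OF K \<sigma>(1)] \<sigma>(2) by blast
  moreover have "\<forall>w. 0 \<le> vertex_point v w"
    unfolding vertex_point_def by simp
  ultimately show ?thesis
    using \<sigma>(2) unfolding closed_simplex_def realization_def by simp
qed

lemma closed_simplex_meets_subcomplex:
  assumes K: "simplicial_complex K" and inj: "inj_on h (realization K)"
    and S: "is_subcomplex K h S" and \<sigma>: "\<sigma> \<in> K" and meets: "h ` closed_simplex K \<sigma> \<inter> S \<noteq> {}"
  obtains v where "v \<in> \<sigma>" "h (vertex_point v) \<in> S"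
proof -
  obtain f where f: "f \<in> closed_simplex K \<sigma>" "h f \<in> S"
    using meets by blast
  then have "h f \<in> (\<Union>\<sigma>'\<in>simplices_in K h S. h ` closed_simplex K \<sigma>')"
    using S unfolding is_subcomplex_def by blast
  then obtain \<sigma>' g where \<sigma>': "\<sigma>' \<in> simplices_in K h S" and g: "g \<in> closed_simplex K \<sigma>'" "h f = h g"
    by blast
  have "f \<in> realization K" "g \<in> realization K"
    using f(1) g(1) unfolding closed_simplex_def by auto
  then have "f = g"
    using inj g(2) unfolding inj_on_def by blast
  have "{v. f v \<noteq> 0} \<in> K"
    using \<open>f \<in> realization K\<close> unfolding realization_def by blast
  then have "{v. f v \<noteq> 0} \<noteq> {}"
    using K unfolding simplicial_complex_def by blast
  then obtain v where v: "f v \<noteq> 0"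
    by blast
  have "\<sigma>' \<in> K" "h ` closed_simplex K \<sigma>' \<subseteq> S"
    using \<sigma>' unfolding simplices_in_def by auto
  moreover have "v \<in> \<sigma>'"
    using g(1) v \<open>f = g\<close> unfolding closed_simplex_def by blast
  ultimately have "h (vertex_point v) \<in> S"
    using vertex_point_in_closed_simplex[OF K] by blast
  moreover have "v \<in> \<sigma>"
    using f(1) v unfolding closed_simplex_def by blast
  ultimately show ?thesis
    using that by blast
qed

lemma good_ordering_sorted_drop:
  assumes gord: "good_ordering_wrt K h le H"
    and xs: "sorted_wrt le xs" "set xs \<subseteq> vertices K" and i: "i < length xs"
    and w: "w \<in> set (drop i xs)" and H: "h (vertex_point (xs ! i)) \<in> H"
  shows "h (vertex_point w) \<in> H"
proof -
  have ord: "is_ordering K le"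
    using gord unfolding good_ordering_wrt_def by blast
  obtain k where "k < length xs - i" "xs ! (i + k) = w"
    using w i by (auto simp: in_set_conv_nth)
  then have k: "i + k < length xs" "xs ! (i + k) = w"
    by auto
  have vw: "xs ! i \<in> vertices K" "w \<in> vertices K"
    using xs(2) i k nth_mem by blast+
  have "le (xs ! i) w"
  proof (cases "k = 0")
    case True
    then show ?thesis
      using ordering_refl[OF ord vw(1)] k(2) by simp
  next
    case False
    then have "i < i + k"
      by simp
    then show ?thesis
      using xs(1) k unfolding sorted_wrt_iff_nth_less by blast
  qed
  with vw H show ?thesis
    using gord unfolding good_ordering_wrt_def by blast
qed

lemma cap_coeff_support:
  assumes K: "simplicial_complex K" and inj: "inj_on h (realization K)"
    and full: "is_full_subcomplex K h H" and gord: "good_ordering_wrt K h le H"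
    and u: "\<forall>\<sigma>\<in>K. card \<sigma> = Suc p \<and> h ` closed_simplex K \<sigma> \<inter> H = {} \<longrightarrow> u \<sigma> = 0"
    and \<rho>: "\<rho> \<in> K" and nz: "cap_coeff le p u \<rho> \<tau> \<noteq> 0"
  shows "\<tau> \<in> simplices_in K h H" "\<tau> \<subseteq> \<rho>"
proof -
  have ord: "is_ordering K le"
    using gord unfolding good_ordering_wrt_def by blast
  obtain xs where xs: "distinct xs" "sorted_wrt le xs" "set xs = \<rho>" "Suc p \<le> length xs"
    "\<tau> = set (drop p xs)" "u (set (take (Suc p) xs)) \<noteq> 0"
    by (rule cap_coeff_nonzeroE[OF K ord \<rho> nz])
  have V: "set xs \<subseteq> vertices K"
    using \<rho> xs(3) by (simp add: simplex_subset_vertices)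
  have "set (take (Suc p) xs) \<noteq> {}"
    using xs(4) by (cases xs) auto
  then have front: "set (take (Suc p) xs) \<in> K" "card (set (take (Suc p) xs)) = Suc p"
    using simplicial_complex_face[OF K \<rho>, of "set (take (Suc p) xs)"] xs(1,3,4)
    by (auto simp: set_take_subset distinct_card)
  then have "h ` closed_simplex K (set (take (Suc p) xs)) \<inter> H \<noteq> {}"
    using u xs(6) by blast
  then obtain v where v: "v \<in> set (take (Suc p) xs)" "h (vertex_point v) \<in> H"
    using closed_simplex_meets_subcomplex[OF K inj _ front(1)] full
    unfolding is_full_subcomplex_def by blast
  then obtain i where i: "i \<le> p" "i < length xs" "xs ! i = v"
    by (auto simp: in_set_conv_nth less_Suc_eq_le)
  have "h (vertex_point w) \<in> H" if "w \<in> \<tau>" for w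
  proof (rule good_ordering_sorted_drop[OF gord xs(2) V i(2)])
    show "w \<in> set (drop i xs)"
      using that xs(5) set_drop_subset_set_drop[OF i(1), of xs] by blast
    show "h (vertex_point (xs ! i)) \<in> H"
      using v(2) i(3) by simp
  qed
  moreover show "\<tau> \<subseteq> \<rho>"
    unfolding xs(5) xs(3)[symmetric] by (rule set_drop_subset)
  moreover have "\<tau> \<in> K"
    using simplicial_complex_face[OF K \<rho>] \<open>\<tau> \<subseteq> \<rho>\<close> xs(4,5) by auto
  ultimately show "\<tau> \<in> simplices_in K h H"
    using full unfolding is_full_subcomplex_def by blast
qed

lemma supported_in_cap_ord:
  assumes K: "simplicial_complex K" and inj: "inj_on h (realization K)"
    and full: "is_full_subcomplex K h H" and gord: "good_ordering_wrt K h le H"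
    and u: "\<forall>\<sigma>\<in>K. card \<sigma> = Suc p \<and> h ` closed_simplex K \<sigma> \<inter> H = {} \<longrightarrow> u \<sigma> = 0"
    and c: "supported_in (simplices_in K h D) c"
  shows "supported_in (simplices_in K h (D \<inter> H)) (cap_ord K le p u c)"
  unfolding supported_in_def
proof (intro allI impI)
  fix \<tau>
  assume "cap_ord K le p u c \<tau> \<noteq> 0"
  then obtain \<rho> where \<rho>: "\<rho> \<in> K" "c \<rho> \<noteq> 0" "cap_coeff le p u \<rho> \<tau> \<noteq> 0"
    by (rule cap_ord_nonzeroE)
  have \<tau>: "\<tau> \<in> simplices_in K h H" "\<tau> \<subseteq> \<rho>"
    using cap_coeff_support[OF K inj full gord u \<rho>(1,3)] by auto
  have "h ` closed_simplex K \<rho> \<subseteq> D"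
    using c \<rho>(2) unfolding supported_in_def simplices_in_def by blast
  moreover have "closed_simplex K \<tau> \<subseteq> closed_simplex K \<rho>"
    using \<tau>(2) unfolding closed_simplex_def by blast
  ultimately show "\<tau> \<in> simplices_in K h (D \<inter> H)"
    using \<tau>(1) unfolding simplices_in_def by blast
qed

lemma cubical_face_Hyp:
  assumes "i \<in> {1..n}" "\<alpha> \<in> {Some 0, None}"
  shows "cubical_face n (Hyp n i \<alpha>)"
proof -
  define q :: "real \<times> complex" where "q = (if \<alpha> = None then (1, 0) else (-1, 0))"
  have "q \<in> P1" "zc q = \<alpha>"
    using assms(2) unfolding q_def P1_def zc_def by (auto simp: norm_Pair)
  then have "(\<lambda>j. if j \<in> {1..n} then q else undefined) \<in> Hyp n i \<alpha>"
    using assms(1) unfolding Hyp_def Pn_def Ptop_def by (auto simp: PiE_def extensional_def)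
  moreover have "Hyp n i \<alpha> = Pn n \<inter> (\<Inter>(j, \<beta>)\<in>{(i, \<alpha>)}. Hyp n j \<beta>)"
    unfolding Hyp_def by auto
  ultimately show ?thesis
    using assms unfolding cubical_face_def by blast
qed

lemma good_triangulation_simplicial_complex: "good_triangulation n K h \<Longrightarrow> simplicial_complex K"
  unfolding good_triangulation_def by blast

lemma good_triangulation_inj_on:
  assumes "good_triangulation n K h"
  shows "inj_on h (realization K)"
proof -
  have "homeomorphic_map (top_of_set (realization K)) (Ptop n) h"
    using assms unfolding good_triangulation_def by blast
  then show ?thesis
    using homeomorphic_imp_injective_map by fastforce
qed

lemma good_triangulation_full_Hyp:
  assumes "good_triangulation n K h" "i \<in> {1..n}" "\<alpha> \<in> {Some 0, None}"
  shows "is_full_subcomplex K h (Hyp n i \<alpha>)"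
proof -
  have "is_full_subcomplex K h (\<Union>{Hyp n i \<alpha>})"
    using assms(1) cubical_face_Hyp[OF assms(2,3)] unfolding good_triangulation_def by blast
  then show ?thesis
    by simp
qed

theorem proposition3p6:
  fixes n :: nat
    and K :: "'v set set"
    and h :: "('v \<Rightarrow> real) \<Rightarrow> nat \<Rightarrow> real \<times> complex"
    and T :: "'v set \<Rightarrow> rat"
    and le :: "'v \<Rightarrow> 'v \<Rightarrow> bool"
  assumes n: "1 \<le> n"
    and good: "good_triangulation n K h"
    and T_cocycle: "is_cocycle K le 2 T"
    and T_rel_W: "\<forall>\<sigma>\<in>K. card \<sigma> = 3 \<and> h ` closed_simplex K \<sigma> \<inter> Hyp n 1 (Some 0) = {}
                    \<longrightarrow> T \<sigma> = 0"
    and ord: "good_ordering_wrt K h le (Hyp n 1 (Some 0))"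
  shows "(\<forall>k c. is_chain K k c \<longrightarrow> bdry K le (cap_ord K le 2 T c) = cap_ord K le 2 T (bdry K le c))
    \<and> (\<forall>k c. is_chain K k c \<longrightarrow>
          is_chain K (k - 2) (cap_ord K le 2 T c) \<and>
          supported_in (simplices_in K h (Hyp n 1 (Some 0))) (cap_ord K le 2 T c))
    \<and> (\<forall>k c. is_chain K k c \<and> supported_in (simplices_in K h (Dn n)) c \<longrightarrow>
          supported_in (simplices_in K h (Dn n \<inter> Hyp n 1 (Some 0))) (cap_ord K le 2 T c))"
proof -
  have K: "simplicial_complex K"
    using good by (rule good_triangulation_simplicial_complex)
  have inj: "inj_on h (realization K)"
    using good by (rule good_triangulation_inj_on)
  have full: "is_full_subcomplex K h (Hyp n 1 (Some 0))"
    using good_triangulation_full_Hyp[OF good] n by simp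
  have ordK: "is_ordering K le"
    using ord unfolding good_ordering_wrt_def by blast
  have T_W: "\<forall>\<sigma>\<in>K. card \<sigma> = Suc 2 \<and> h ` closed_simplex K \<sigma> \<inter> Hyp n 1 (Some 0) = {} \<longrightarrow> T \<sigma> = 0"
    using T_rel_W by (simp add: numeral_3_eq_3)
  show ?thesis
  proof (intro conjI allI impI)
    fix k c
    show "bdry K le (cap_ord K le 2 T c) = cap_ord K le 2 T (bdry K le c)"
      by (rule bdry_cap_ord[OF K ordK T_cocycle])
  next
    fix k c
    assume "is_chain K k c"
    then show "is_chain K (k - 2) (cap_ord K le 2 T c)"
      by (rule is_chain_cap_ord[OF K ordK])
  next
    fix k c
    assume "is_chain K k c"
    then have "supported_in (simplices_in K h UNIV) c"
      unfolding is_chain_def supported_in_def simplices_in_def by blast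
    then show "supported_in (simplices_in K h (Hyp n 1 (Some 0))) (cap_ord K le 2 T c)"
      using supported_in_cap_ord[OF K inj full ord T_W, of UNIV] by simp
  next
    fix k c
    assume "is_chain K k c \<and> supported_in (simplices_in K h (Dn n)) c"
    then show "supported_in (simplices_in K h (Dn n \<inter> Hyp n 1 (Some 0))) (cap_ord K le 2 T c)"
      using supported_in_cap_ord[OF K inj full ord T_W] by blast
  qed
qed

end
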